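(* Let $n\ge 2$, let $X$ be a real $n\times n$ matrix with $\|X\|=1$, and define the linear map $T:\mathfrak{gl}(n,\mathbb R)\to\mathfrak{gl}(n,\mathbb R)$ by $T(Y)=[X^T,[X,Y]]$. Let $\alpha$ be the maximum eigenvalue of $T$. Then the multiplicity of the eigenvalue $\alpha$ is at least $2$.
   Context: $\mathfrak{gl}(n,\mathbb R)$ is the space of real $n\times n$ matrices with the Frobenius inner product $\langle Y_1,Y_2\rangle=\sum_{i,j}(Y_1)_{ij}(Y_2)_{ij}$, with respect to which $T$ is symmetric (so its eigenvalues are real). $[A,B]=AB-BA$, $X^T$ is the transpose, and $\|X\|^2=\sum_{i,j}x_{ij}^2$. *)

theory Defs
  imports "HOL-Analysis.Analysis"
begin

text \<open>Matrices in gl(n,R) are represented as real^'n^'n; the inner product on this type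
is the Frobenius inner product and norm is the Frobenius norm.\<close>

definition commutator :: "real^'n^'n \<Rightarrow> real^'n^'n \<Rightarrow> real^'n^'n" where
  "commutator A B = A ** B - B ** A"

definition Top :: "real^'n^'n \<Rightarrow> real^'n^'n \<Rightarrow> real^'n^'n" where
  "Top X Y = commutator (transpose X) (commutator X Y)"

definition is_eigenvalue :: "('a::real_vector \<Rightarrow> 'a) \<Rightarrow> real \<Rightarrow> bool" where
  "is_eigenvalue T \<mu> \<longleftrightarrow> (\<exists>v. v \<noteq> 0 \<and> T v = \<mu> *\<^sub>R v)"

definition eigenspace :: "('a::real_vector \<Rightarrow> 'a) \<Rightarrow> real \<Rightarrow> 'a set" where
  "eigenspace T \<mu> = {v. T v = \<mu> *\<^sub>R v}"

end

theory Submission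
  imports Defs
begin

text \<open>Write \<open>J Y = [X, Y]\<^sup>T\<close>. Then \<open>J (J Y) = - T Y\<close> and \<open>J Y\<close> is orthogonal to \<open>Y\<close>,
  so \<open>J\<close> maps an eigenvector of a nonzero eigenvalue \<open>\<alpha>\<close> of \<open>T\<close> to a second eigenvector
  for \<open>\<alpha>\<close> orthogonal to the first. The kernel of \<open>T\<close> contains \<open>I\<close> and \<open>X\<close>, and is all
  of \<open>gl(n)\<close> when \<open>X\<close> is scalar. Hence every eigenvalue of \<open>T\<close> has multiplicity at least 2.\<close>

lemma two_le_dim_of_not_in_span:
  fixes S :: "'a::euclidean_space set"
  assumes "u \<in> S" "v \<in> S" "u \<noteq> 0" "v \<notin> span {u}"
  shows "2 \<le> dim S"
proof -
  have "independent {u}"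
    using assms(3) by simp
  then have "independent {v, u}"
    using assms(4) by (simp add: independent_insert)
  moreover have "card {v, u} = 2"
    using assms(4) span_base[of u "{u}"] by (cases "v = u") auto
  ultimately show ?thesis
    using independent_card_le_dim[of "{v, u}" S] assms(1,2) by simp
qed

lemma two_le_dim_eigenspace_of_skew_square_root:
  fixes T J :: "'a::euclidean_space \<Rightarrow> 'a"
  assumes J_scaleR: "\<And>c v. J (c *\<^sub>R v) = c *\<^sub>R J v"
    and J_square: "\<And>v. J (J v) = - T v"
    and J_skew: "\<And>v. J v \<bullet> v = 0"
    and "is_eigenvalue T \<mu>" "\<mu> \<noteq> 0"
  shows "2 \<le> dim (eigenspace T \<mu>)"
proof -
  obtain v where v: "v \<noteq> 0" "T v = \<mu> *\<^sub>R v"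
    using assms(4) unfolding is_eigenvalue_def by blast
  have JJv: "J (J v) = - \<mu> *\<^sub>R v"
    using J_square v(2) by simp
  have "T (J v) = - J (J (J v))"
    using J_square[of "J v"] by simp
  also have "\<dots> = \<mu> *\<^sub>R J v"
    using J_scaleR[of "- \<mu>" v] by (simp add: JJv)
  finally have TJv: "T (J v) = \<mu> *\<^sub>R J v" .
  have Jv_nonzero: "J v \<noteq> 0"
  proof
    assume "J v = 0"
    then have "- \<mu> *\<^sub>R v = 0"
      using JJv J_scaleR[of 0 0] by simp
    with v(1) \<open>\<mu> \<noteq> 0\<close> show False by simp
  qed
  have "v \<notin> span {J v}"
  proof
    assume "v \<in> span {J v}"
    then obtain c where "v = c *\<^sub>R J v"
      by (auto simp: span_singleton)
    then have "v \<bullet> v = c * (J v \<bullet> v)"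
      by (metis inner_scaleR_left)
    with J_skew v(1) show False by simp
  qed
  with v(2) TJv Jv_nonzero show ?thesis
    by (intro two_le_dim_of_not_in_span[of "J v" _ v]) (auto simp: eigenspace_def)
qed

lemma transpose_diff:
  "transpose (A - B) = transpose A - (transpose B :: 'a::ab_group_add^'n^'m)"
  by (simp add: transpose_def vec_eq_iff)

lemma matrix_diff_ldistrib:
  "(A :: 'a::ring_1^'n^'m) ** (B - C) = A ** B - A ** C"
  by (simp add: matrix_matrix_mult_def vec_eq_iff sum_subtractf right_diff_distrib)

lemma matrix_diff_rdistrib:
  "((A :: 'a::ring_1^'n^'m) - B) ** C = A ** C - B ** C"
  by (simp add: matrix_matrix_mult_def vec_eq_iff sum_subtractf left_diff_distrib)

lemma transpose_inner_eq_trace: "transpose (A :: real^'n^'n) \<bullet> B = trace (A ** B)"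
  unfolding inner_vec_def trace_def matrix_matrix_mult_def transpose_def
  by simp (rule sum.swap)

definition transposed_commutator :: "real^'n^'n \<Rightarrow> real^'n^'n \<Rightarrow> real^'n^'n" where
  "transposed_commutator X Y = transpose (commutator X Y)"

lemma transposed_commutator_scaleR:
  "transposed_commutator X (c *\<^sub>R Y) = c *\<^sub>R transposed_commutator X Y"
  by (simp add: transposed_commutator_def commutator_def matrix_scalar_ac transpose_scalar
      flip: scalar_matrix_assoc scaleR_diff_right)

lemma transposed_commutator_twice:
  "transposed_commutator X (transposed_commutator X Y) = - Top X Y"
  by (simp add: transposed_commutator_def Top_def commutator_def transpose_diff
      matrix_transpose_mul matrix_diff_ldistrib matrix_diff_rdistrib)

lemma inner_transposed_commutator_self: "transposed_commutator X Y \<bullet> Y = 0"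
  using trace_mul_sym[of "X ** Y" Y]
  by (simp add: transposed_commutator_def transpose_inner_eq_trace commutator_def
      matrix_diff_rdistrib trace_sub matrix_mul_assoc)

lemma Top_mat_1: "Top X (mat 1) = 0"
  by (simp add: Top_def commutator_def)

lemma Top_self: "Top X X = 0"
  by (simp add: Top_def commutator_def)

lemma Top_scalar_matrix: "Top (c *\<^sub>R mat 1) Y = 0"
  by (simp add: Top_def commutator_def matrix_scalar_ac flip: scalar_matrix_assoc)

lemma mat_1_nonzero: "(mat 1 :: 'a::zero_neq_one^'n^'n) \<noteq> 0"
proof
  fix i :: 'n
  assume "(mat 1 :: 'a^'n^'n) = 0"
  then have "(mat 1 :: 'a^'n^'n) $ i $ i = 0"
    by simp
  then show False
    by (simp add: mat_def)
qed

lemma two_le_dim_kernel_Top: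
  fixes X :: "real^'n^'n"
  assumes "CARD('n) \<ge> 2"
  shows "2 \<le> dim (eigenspace (Top X) 0)"
proof (cases "X \<in> span {mat 1}")
  case True
  then obtain c where "X = c *\<^sub>R mat 1"
    unfolding span_singleton by blast
  then have "eigenspace (Top X) 0 = UNIV"
    by (simp add: eigenspace_def Top_scalar_matrix)
  moreover have "2 * 2 \<le> CARD('n) * CARD('n)"
    using mult_le_mono[OF assms assms] .
  ultimately show ?thesis
    by simp
next
  case False
  have "mat 1 \<in> eigenspace (Top X) 0" "X \<in> eigenspace (Top X) 0"
    by (simp_all add: eigenspace_def Top_mat_1 Top_self)
  with False show ?thesis
    using mat_1_nonzero two_le_dim_of_not_in_span[of "mat 1" _ X] by simp
qed

theorem mainTheorem6:
  fixes X :: "real^'n^'n" and \<alpha> :: real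
  assumes "CARD('n) \<ge> 2"
    and "norm X = 1"
    and "is_eigenvalue (Top X) \<alpha>"
    and "\<forall>\<mu>. is_eigenvalue (Top X) \<mu> \<longrightarrow> \<mu> \<le> \<alpha>"
  shows "dim (eigenspace (Top X) \<alpha>) \<ge> 2"
proof (cases "\<alpha> = 0")
  case True
  then show ?thesis
    using two_le_dim_kernel_Top[OF assms(1)] by simp
next
  case False
  show ?thesis
    by (rule two_le_dim_eigenspace_of_skew_square_root[of "transposed_commutator X"])
      (use False assms(3) in \<open>simp_all add: transposed_commutator_scaleR
        transposed_commutator_twice inner_transposed_commutator_self\<close>)
qed

end
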